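(* Let $n$ be a positive integer. Every eigenvalue of the Fibonacci--Redheffer matrix $F_R(n)$ has geometric multiplicity $1$.
   Context: The Fibonacci numbers are $F_1=F_2=1$, $F_n=F_{n-1}+F_{n-2}$ for $n\ge 3$. The Fibonacci--Redheffer matrix $F_R(n)=[F_R(i,j)]_{i,j=1}^n$ is defined by $F_R(i,j)=1$ if $j=1$; $F_R(i,j)=F_i$ if $i\mid j$; and $F_R(i,j)=0$ otherwise. The geometric multiplicity of an eigenvalue $\lambda$ is the dimension of the null space of $F_R(n)-\lambda I_n$. *)

theory Defs
  imports "Jordan_Normal_Form.Matrix_Kernel" "Jordan_Normal_Form.Char_Poly" "HOL-Number_Theory.Fib"
begin

text \<open>Matrix indices in Jordan_Normal_Form are
  0-based, so the entry (i,j) here is the paper's entry (i+1, j+1).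
  Paper: F_R(i,j) = 1 if j = 1; F_i if i divides j; 0 otherwise.
  fib from HOL-Number_Theory satisfies fib 1 = fib 2 = 1.\<close>
definition fib_redheffer :: "nat \<Rightarrow> complex mat" where
  "fib_redheffer n = mat n n (\<lambda>(i, j).
     if j + 1 = 1 then 1
     else if (i + 1) dvd (j + 1) then of_nat (fib (i + 1))
     else 0)"

definition geom_mult :: "complex mat \<Rightarrow> complex \<Rightarrow> nat" where
  "geom_mult A ev = kernel_dim (A - ev \<cdot>\<^sub>m 1\<^sub>m (dim_row A))"

end

theory Submission
  imports Defs "HOL-Library.Complex_Order"
begin

(* Let v be an eigenvector for ev and suppose v_1 = 0. The first row of F_R(n) v = ev v then
  says v_2 + ... + v_n = 0, while rows 2, ..., n form an upper triangular system with
  nonnegative entries and diagonal F_2 < F_3 < ... < F_n. If k is the largest index with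
  v_k \<noteq> 0, row k forces ev = F_k, and back substitution shows that every v_i / v_k is a
  nonnegative real; as v_k / v_k = 1, the sum cannot vanish. Hence v_1 \<noteq> 0 for every
  eigenvector, so the eigenspace meets the hyperplane v_1 = 0 only in 0 and is a line. *)

lemma fib_less_fib_Suc: "2 \<le> m \<Longrightarrow> fib m < fib (Suc m)"
  using fib_neq_0_nat[of "m - 1"] by (cases m rule: fib.cases) auto

lemma fib_less_fib:
  assumes "2 \<le> m" "m < n"
  shows "fib m < fib n"
  using assms(2)
proof (induction n)
  case (Suc n)
  then show ?case
    using fib_less_fib_Suc[of n] assms(1) by (cases "m = n") auto
qed simp

lemma triangular_eigenvector_sum_neq_0:
  fixes d :: "nat \<Rightarrow> real" and x :: "nat \<Rightarrow> complex"
  assumes I: "finite I"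
    and S: "\<And>i. i \<in> I \<Longrightarrow> S i \<subseteq> {j \<in> I. i < j}"
    and d_less: "\<And>i j. i \<in> I \<Longrightarrow> j \<in> I \<Longrightarrow> i < j \<Longrightarrow> d i < d j"
    and d_nonneg: "\<And>i. i \<in> I \<Longrightarrow> 0 \<le> d i"
    and eq: "\<And>i. i \<in> I \<Longrightarrow> of_real (d i) * (x i + (\<Sum>j\<in>S i. x j)) = ev * x i"
    and nonzero: "i0 \<in> I" "x i0 \<noteq> 0"
  shows "(\<Sum>i\<in>I. x i) \<noteq> 0"
proof -
  define k where "k = Max {i \<in> I. x i \<noteq> 0}"
  have k: "k \<in> I" "x k \<noteq> 0"
    using Max_in[of "{i \<in> I. x i \<noteq> 0}"] I nonzero unfolding k_def by auto
  have above_k: "x j = 0" if "j \<in> I" "k < j" for j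
  proof (rule ccontr)
    assume "x j \<noteq> 0"
    then have "j \<le> k" unfolding k_def using I that(1) by (intro Max_ge) auto
    with that(2) show False by simp
  qed
  have "(\<Sum>j\<in>S k. x j) = 0"
    using S[OF k(1)] above_k by (intro sum.neutral) auto
  then have ev: "ev = of_real (d k)"
    using eq[OF k(1)] k(2) by simp
  define y where "y i = x i / x k" for i
  \<comment> \<open>In \<open>Complex_Order\<close>, \<open>0 \<le> z\<close> means that \<open>z\<close> is a nonnegative real.\<close>
  have y_nonneg: "0 \<le> y i" if "i \<in> I" for i
    using that
  proof (induction i rule: measure_induct_rule[where f = "\<lambda>i. k - i"])
    case (less i)
    consider "k < i" | "i = k" | "i < k" by linarith
    then show ?case
    proof cases
      case 1
      then show ?thesis using above_k less.prems by (simp add: y_def)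
    next
      case 2
      then show ?thesis using k(2) by (simp add: y_def less_eq_complex_def)
    next
      case 3
      have "0 \<le> y j" if "j \<in> S i" for j
      proof (cases "j \<le> k")
        case True
        then show ?thesis using S[OF less.prems] that 3 by (intro less.IH) auto
      next
        case False
        then show ?thesis using S[OF less.prems] that above_k by (auto simp: y_def)
      qed
      then have T: "0 \<le> (\<Sum>j\<in>S i. y j)" by (rule sum_nonneg)
      have "of_real (d k - d i) * y i = of_real (d i) * (\<Sum>j\<in>S i. y j)"
        using eq[OF less.prems] k(2) unfolding ev y_def sum_divide_distrib[symmetric]
        by (simp add: field_simps)
      then have "y i = of_real (d i / (d k - d i)) * (\<Sum>j\<in>S i. y j)"
        using d_less[OF less.prems k(1) 3] by (simp add: field_simps)
      moreover have "0 \<le> (of_real (d i / (d k - d i)) :: complex)"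
        using d_nonneg[OF less.prems] d_less[OF less.prems k(1) 3]
        by (simp add: less_eq_complex_def)
      ultimately show ?thesis
        using T by (metis mult_nonneg_nonneg)
    qed
  qed
  have "1 \<le> (\<Sum>i\<in>I. y i)"
    using member_le_sum[of k I y] k I y_nonneg by (simp add: y_def)
  then have "(\<Sum>i\<in>I. y i) \<noteq> 0"
    by (auto simp: less_eq_complex_def simp del: Re_sum Im_sum)
  moreover have "(\<Sum>i\<in>I. x i) = x k * (\<Sum>i\<in>I. y i)"
    using k(2) by (simp add: y_def sum_distrib_left)
  ultimately show ?thesis
    using k(2) by simp
qed

lemma kernel_dim_eq_1I:
  fixes B :: "'a :: field mat"
  assumes B: "B \<in> carrier_mat nr nc" and k: "k < nc"
    and v: "v \<in> mat_kernel B" "v $ k \<noteq> 0"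
    and vanish: "\<And>w. w \<in> mat_kernel B \<Longrightarrow> w $ k = 0 \<Longrightarrow> w = 0\<^sub>v nc"
  shows "kernel_dim B = 1"
proof -
  interpret K: kernel nr nc B by unfold_locales (rule B)
  have v_carr: "v \<in> carrier_vec nc" using mat_kernelD[OF B v(1)] by simp
  have multiple: "w = (w $ k / v $ k) \<cdot>\<^sub>v v" if w: "w \<in> mat_kernel B" for w
  proof -
    define c where "c = w $ k / v $ k"
    have w_carr: "w \<in> carrier_vec nc" using mat_kernelD[OF B w] by simp
    have "B *\<^sub>v (w - c \<cdot>\<^sub>v v) = B *\<^sub>v w - c \<cdot>\<^sub>v (B *\<^sub>v v)"
      using B v_carr w_carr by (simp add: mult_minus_distrib_mat_vec mult_mat_vec)
    then have "w - c \<cdot>\<^sub>v v \<in> mat_kernel B"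
      using B v_carr w_carr mat_kernelD[OF B v(1)] mat_kernelD[OF B w]
      by (intro mat_kernelI[OF B]) auto
    moreover have "(w - c \<cdot>\<^sub>v v) $ k = 0"
      using v_carr w_carr k v(2) by (simp add: c_def)
    ultimately have "w - c \<cdot>\<^sub>v v = 0\<^sub>v nc" by (rule vanish)
    then show ?thesis
      unfolding c_def[symmetric]
    proof (intro eq_vecI)
      fix i assume "w - c \<cdot>\<^sub>v v = 0\<^sub>v nc" "i < dim_vec (c \<cdot>\<^sub>v v)"
      then show "w $ i = (c \<cdot>\<^sub>v v) $ i"
        using v_carr w_carr
        by (metis carrier_vecD index_minus_vec(1) index_smult_vec index_zero_vec(1) right_minus_eq)
    qed (use v_carr w_carr in simp)
  qed
  have "K.span {v} = mat_kernel B"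
  proof
    show "K.span {v} \<subseteq> mat_kernel B"
      using v(1) by (intro K.Ker.span_is_subset2) auto
    show "mat_kernel B \<subseteq> K.span {v}"
    proof
      fix w assume "w \<in> mat_kernel B"
      have "v \<in> K.NC.span {v}"
        using K.NC.in_own_span[of "{v}"] v_carr by auto
      then have "w \<in> K.NC.span {v}"
        using multiple[OF \<open>w \<in> mat_kernel B\<close>] v_carr
        by (metis K.NC.smult_in_span empty_subsetI insert_subset)
      then show "w \<in> K.span {v}"
        using K.span_same[of "{v}"] v(1) by simp
    qed
  qed
  moreover have "v \<noteq> 0\<^sub>v nc" using v(2) k by auto
  ultimately have "K.dim = 1"
    using v(1) by (intro K.Ker.dim1I) auto
  then show ?thesis by simp
qed

lemma fib_redheffer_carrier_mat: "fib_redheffer n \<in> carrier_mat n n"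
  by (simp add: fib_redheffer_def)

lemma fib_redheffer_mult_vec_nth:
  assumes x: "x \<in> carrier_vec n" and i: "i < n"
  shows "(fib_redheffer n *\<^sub>v x) $ i
    = x $ 0 + of_nat (fib (i + 1)) * (\<Sum>j \<in> {j \<in> {1..<n}. (i + 1) dvd (j + 1)}. x $ j)"
proof -
  have "(fib_redheffer n *\<^sub>v x) $ i = (\<Sum>j \<in> {0..<n}. fib_redheffer n $$ (i, j) * x $ j)"
    using x i by (simp add: fib_redheffer_def scalar_prod_def)
  also have "{0..<n} = insert 0 {1..<n}"
    using i by auto
  also have "(\<Sum>j \<in> insert 0 {1..<n}. fib_redheffer n $$ (i, j) * x $ j)
    = x $ 0 + (\<Sum>j \<in> {1..<n}. of_nat (fib (i + 1)) * (if (i + 1) dvd (j + 1) then x $ j else 0))"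
    using i by (auto simp: fib_redheffer_def intro!: sum.cong)
  also have "\<dots> = x $ 0 + of_nat (fib (i + 1)) * (\<Sum>j \<in> {j \<in> {1..<n}. (i + 1) dvd (j + 1)}. x $ j)"
    unfolding sum_distrib_left[symmetric] sum.inter_filter[OF finite_atLeastLessThan] ..
  finally show ?thesis .
qed

lemma fib_redheffer_eigenvector_nth_0:
  assumes "eigenvector (fib_redheffer n) v ev"
  shows "v $ 0 \<noteq> 0"
proof
  assume v0: "v $ 0 = 0"
  have v: "v \<in> carrier_vec n" "v \<noteq> 0\<^sub>v n" and Av: "fib_redheffer n *\<^sub>v v = ev \<cdot>\<^sub>v v"
    using assms unfolding eigenvector_def by (auto simp: fib_redheffer_def)
  have row: "of_nat (fib (i + 1)) * (\<Sum>j \<in> {j \<in> {1..<n}. (i + 1) dvd (j + 1)}. v $ j) = ev * v $ i"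
    if "i < n" for i
    using arg_cong[OF Av, of "\<lambda>w. w $ i"] fib_redheffer_mult_vec_nth[OF v(1) that] v(1) v0 that
    by simp
  obtain i0 where i0: "i0 < n" "v $ i0 \<noteq> 0"
    using v by (metis carrier_vecD eq_vecI index_zero_vec)
  then have "i0 \<in> {1..<n}" using v0 by (cases i0) auto
  have "{j \<in> {1..<n}. (0 + 1) dvd (j + 1)} = {1..<n}"
    by auto
  then have "(\<Sum>j \<in> {1..<n}. v $ j) = 0"
    using row[of 0] i0(1) v0 by simp
  moreover have "(\<Sum>j \<in> {1..<n}. v $ j) \<noteq> 0"
  proof (rule triangular_eigenvector_sum_neq_0)
    fix i assume i: "i \<in> {1..<n}"
    have "{j \<in> {1..<n}. (i + 1) dvd (j + 1)} = insert i {j \<in> {i<..<n}. (i + 1) dvd (j + 1)}"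
      using i by (auto dest: dvd_imp_le)
    then show "of_real (real (fib (i + 1)))
        * (v $ i + (\<Sum>j \<in> {j \<in> {i<..<n}. (i + 1) dvd (j + 1)}. v $ j)) = ev * v $ i"
      using row[of i] i by simp
  qed (use \<open>i0 \<in> {1..<n}\<close> i0 in \<open>auto intro: fib_less_fib\<close>)
  ultimately show False by simp
qed

lemma fib_redheffer_minus_eq_char_matrix:
  "fib_redheffer n - ev \<cdot>\<^sub>m 1\<^sub>m n = char_matrix (fib_redheffer n) ev"
  by (rule eq_matI) (auto simp: char_matrix_def fib_redheffer_def)

theorem lemma3:
  fixes n :: nat and ev :: complex
  assumes "n \<ge> 1"
    and "eigenvalue (fib_redheffer n) ev"
  shows "geom_mult (fib_redheffer n) ev = 1"
proof -
  let ?A = "fib_redheffer n"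
  have A: "?A \<in> carrier_mat n n" by (rule fib_redheffer_carrier_mat)
  have eigenvector_iff:
    "eigenvector ?A w ev \<longleftrightarrow> w \<in> mat_kernel (char_matrix ?A ev) \<and> w \<noteq> 0\<^sub>v n" for w
    using eigenvector_char_matrix[OF A] mat_kernel[OF char_matrix_closed[OF A]] by auto
  obtain v where "eigenvector ?A v ev"
    using assms(2) unfolding eigenvalue_def by blast
  have "kernel_dim (char_matrix ?A ev) = 1"
  proof (rule kernel_dim_eq_1I)
    show "char_matrix ?A ev \<in> carrier_mat n n" using A by simp
    show "v \<in> mat_kernel (char_matrix ?A ev)" "v $ 0 \<noteq> 0"
      using eigenvector_iff \<open>eigenvector ?A v ev\<close> fib_redheffer_eigenvector_nth_0 by blast+
    show "w = 0\<^sub>v n" if "w \<in> mat_kernel (char_matrix ?A ev)" "w $ 0 = 0" for w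
      using that eigenvector_iff fib_redheffer_eigenvector_nth_0 by blast
  qed (use assms(1) in simp)
  then show ?thesis
    using A by (simp add: geom_mult_def fib_redheffer_minus_eq_char_matrix)
qed

end
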